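(* For all integers $L,M,N\ge 0$, $$\sum_{i,j,k\in\mathbb Z}(-1)^{i+j+k}q^{\binom{i+j+k}{2}+i^2}\begin{bmatrix}2L\\ L-i\end{bmatrix}_{q}\begin{bmatrix}2M\\ M-j\end{bmatrix}_{q}\begin{bmatrix}2N\\ N-k\end{bmatrix}_{q}=q^{(N-M)^2}(q)_{L+M+N}\begin{bmatrix}2L\\ L+N-M\end{bmatrix}_{q}.$$
   Context: $q$ is complex with $|q|<1$. $(q)_n=\prod_{j=1}^n(1-q^j)$. The Gaussian binomial is $\begin{bmatrix}n+m\\ n\end{bmatrix}_q=\frac{(q)_{n+m}}{(q)_n(q)_m}$ if $n,m$ are nonnegative integers and $0$ otherwise. $\binom{x}{2}=x(x-1)/2$. *)

theory Defs
  imports "HOL-Analysis.Analysis"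
begin

definition qpoch :: "complex \<Rightarrow> nat \<Rightarrow> complex" where
  "qpoch q n = (\<Prod>j=1..n. 1 - q ^ j)"

text \<open>Gaussian binomial [n+m choose n]_q for integers: (q)_{n+m}/((q)_n (q)_m) if n, m \<ge> 0, else 0.
  Written as qbinom q a b = [a choose b]_q, i.e. n = b, m = a - b.\<close>
definition qbinom :: "complex \<Rightarrow> int \<Rightarrow> int \<Rightarrow> complex" where
  "qbinom q a b = (if 0 \<le> b \<and> 0 \<le> a - b
     then qpoch q (nat a) / (qpoch q (nat b) * qpoch q (nat (a - b))) else 0)"

definition choose2 :: "int \<Rightarrow> int" where
  "choose2 x = x * (x - 1) div 2"

end

theory Submission
  imports Defs "HOL-Library.Groups_Big_Fun"
begin

text \<open>
  Write \<open>A\<^sub>n(i) = [2n, n - i]\<close> for the central Gaussian binomials and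
  \<open>w(m) = (-1)\<^sup>m q\<^bsup>m(m-1)/2\<^esup>\<close>, so that the summand of the theorem is
  \<open>q\<^bsup>i\<^sup>2\<^esup> A\<^sub>L(i) A\<^sub>M(j) A\<^sub>N(k) w(i + j + k)\<close>.  For \<open>0 < |q| < 1\<close> the proof combines:
  \<^item> a convolution \<open>\<Sum>\<^sub>j A\<^sub>M(j) A\<^sub>N(u - j) = \<Sum>\<^sub>p \<gamma>(p) A\<^sub>p(u)\<close>, a special case of the expansion
    of a product of two Gaussian binomials, proved by a three-term recurrence in the upper index;
  \<^item> an expansion \<open>q\<^bsup>i\<^sup>2\<^esup> A\<^sub>L(i) = \<Sum>\<^sub>n c(n) A\<^sub>n(i)\<close>, from a \<open>q\<close>-Chu--Vandermonde sum;
  \<^item> the orthogonality \<open>\<Sum>\<^sub>i\<^sub>,\<^sub>u A\<^sub>n(i) A\<^sub>p(u) w(i + u) = \<delta>\<^sub>n\<^sub>p (q)\<^sub>2\<^sub>p\<close>, from the \<open>q\<close>-binomial theorem.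
  Together they collapse the triple sum to \<open>\<Sum>\<^sub>n c(n) \<gamma>(n) (q)\<^sub>2\<^sub>n\<close>, which the
  \<open>q\<close>-Pfaff--Saalschuetz summation evaluates.  All sums range over \<open>\<int>\<close> with finite support
  (\<open>Sum_any\<close>); reciprocal factorials \<open>1/(q)\<^sub>n\<close>, extended by zero to \<open>n < 0\<close>, make the supports
  automatic.  The case \<open>q = 0\<close> follows by continuity, and the \<open>has_sum\<close> statement from the
  finite support of the summand.
\<close>

subsection \<open>Sums with finite support over the integers\<close>

lemma finite_support_ivl:
  "(\<And>x. x < lo \<or> hi < x \<Longrightarrow> f x = 0) \<Longrightarrow> finite {x :: int. f x \<noteq> 0}"
  by (rule finite_subset[of _ "{lo..hi}"]) force+

lemma Sum_any_single: "(\<And>x. x \<noteq> a \<Longrightarrow> f x = 0) \<Longrightarrow> Sum_any f = f a"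
  using Sum_any.expand_superset[of "{a}" f] by auto

lemma Sum_any_shift: "Sum_any (\<lambda>x. f (x + c)) = Sum_any (f :: int \<Rightarrow> 'a :: comm_monoid_add)"
  by (rule Sum_any.reindex_cong[symmetric, of "\<lambda>x. x + c"])
     (auto simp: bij_def inj_def surj_def intro: exI[of _ "_ - c"])

lemma Sum_any_reflect: "Sum_any (\<lambda>x. f (c - x)) = Sum_any (f :: int \<Rightarrow> 'a :: comm_monoid_add)"
  by (rule Sum_any.reindex_cong[symmetric, of "\<lambda>x. c - x"])
     (auto simp: bij_def inj_def surj_def intro: exI[of _ "c - _"])

text \<open>Constant factors; no finiteness is needed, as the support is unchanged or the sum is zero.\<close>
lemma Sum_any_mult_left:
  fixes f :: "'b \<Rightarrow> 'a :: semiring_no_zero_divisors"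
  shows "Sum_any (\<lambda>x. c * f x) = c * Sum_any f"
proof (cases "c = 0")
  case False
  hence "{x. c * f x \<noteq> 0} = {x. f x \<noteq> 0}" by auto
  thus ?thesis by (simp add: Sum_any.expand_set sum_distrib_left)
qed simp

lemma Sum_any_mult_right:
  fixes f :: "'b \<Rightarrow> 'a :: semiring_no_zero_divisors"
  shows "Sum_any (\<lambda>x. f x * c) = Sum_any f * c"
proof (cases "c = 0")
  case False
  hence "{x. f x * c \<noteq> 0} = {x. f x \<noteq> 0}" by auto
  thus ?thesis by (simp add: Sum_any.expand_set sum_distrib_right)
qed simp

lemma Sum_any_diff:
  fixes f g :: "'b \<Rightarrow> 'a :: ab_group_add"
  assumes "finite {x. f x \<noteq> 0}" "finite {x. g x \<noteq> 0}"
  shows "Sum_any (\<lambda>x. f x - g x) = Sum_any f - Sum_any g"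
proof -
  have "finite {x. - g x \<noteq> 0}" using assms(2) by simp
  hence "Sum_any (\<lambda>x. f x + - g x) = Sum_any f + Sum_any (\<lambda>x. - g x)"
    using assms(1) by (rule Sum_any.distrib[rotated])
  moreover have "Sum_any (\<lambda>x. - g x) = - Sum_any g"
    by (simp add: Sum_any.expand_set sum_negf)
  ultimately show ?thesis by simp
qed

lemma Sum_any_add_diff:
  fixes f g h :: "'b \<Rightarrow> 'a :: ab_group_add"
  assumes "finite {x. f x \<noteq> 0}" "finite {x. g x \<noteq> 0}" "finite {x. h x \<noteq> 0}"
  shows "Sum_any (\<lambda>x. f x + g x - h x) = Sum_any f + Sum_any g - Sum_any h"
proof -
  have "finite {x. f x + g x \<noteq> 0}"
    by (rule finite_subset[OF _ finite_UnI[OF assms(1,2)]]) auto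
  thus ?thesis using Sum_any_diff[OF _ assms(3)] Sum_any.distrib[OF assms(1,2)] by simp
qed

lemma Sum_any_telescope:
  fixes g :: "int \<Rightarrow> 'a :: ab_group_add"
  assumes "finite {x. g x \<noteq> 0}"
  shows "Sum_any (\<lambda>x. g (x - 1) - g x) = 0"
proof -
  have "finite ((\<lambda>x. x - 1) -` {x. g x \<noteq> 0})"
    using assms by (rule finite_vimageI) (simp add: inj_def)
  hence "finite {x. g (x - 1) \<noteq> 0}" by (simp add: vimage_def)
  hence "Sum_any (\<lambda>x. g (x - 1) - g x) = Sum_any (\<lambda>x. g (x - 1)) - Sum_any g"
    using assms by (rule Sum_any_diff)
  also have "Sum_any (\<lambda>x. g (x - 1)) = Sum_any g"
    using Sum_any_shift[of g "- 1"] by simp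
  finally show ?thesis by simp
qed

lemma Sum_any_swap_box:
  assumes "finite S" "finite T" "\<And>x y. F x y \<noteq> 0 \<Longrightarrow> x \<in> S \<and> y \<in> T"
  shows "Sum_any (\<lambda>x. Sum_any (F x)) = Sum_any (\<lambda>y. Sum_any (\<lambda>x. F x y))"
  by (rule Sum_any.swap[of "S \<times> T"]) (use assms in auto)

lemma sum_box_Sum_any:
  assumes "finite A" "finite B" "finite C" "\<And>x. x \<notin> A \<times> B \<times> C \<Longrightarrow> F x = 0"
  shows "sum F (A \<times> B \<times> C) = Sum_any (\<lambda>i. Sum_any (\<lambda>j. Sum_any (\<lambda>k. F (i, j, k))))"
proof -
  have "Sum_any (\<lambda>k. F (i, j, k)) = (\<Sum>k\<in>C. F (i, j, k))" for i j
    by (rule Sum_any.expand_superset) (use assms in auto)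
  moreover have "Sum_any (\<lambda>j. \<Sum>k\<in>C. F (i, j, k)) = (\<Sum>j\<in>B. \<Sum>k\<in>C. F (i, j, k))" for i
    by (rule Sum_any.expand_superset) (use assms in \<open>auto intro!: sum.neutral\<close>)
  moreover have "Sum_any (\<lambda>i. \<Sum>j\<in>B. \<Sum>k\<in>C. F (i, j, k)) = (\<Sum>i\<in>A. \<Sum>j\<in>B. \<Sum>k\<in>C. F (i, j, k))"
    by (rule Sum_any.expand_superset) (use assms in \<open>auto intro!: sum.neutral\<close>)
  ultimately show ?thesis by (simp add: sum.cartesian_product)
qed

lemma biorthogonal_pairing:
  fixes c g d :: "'n \<Rightarrow> 'a :: comm_ring_1" and a b :: "'n \<Rightarrow> 'i \<Rightarrow> 'a"
  assumes fin: "finite S" "finite I"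
    and supp_c: "\<And>n. c n \<noteq> 0 \<Longrightarrow> n \<in> S" and supp_g: "\<And>p. g p \<noteq> 0 \<Longrightarrow> p \<in> S"
    and supp_a: "\<And>n i. n \<in> S \<Longrightarrow> a n i \<noteq> 0 \<Longrightarrow> i \<in> I"
    and orth: "\<And>n p. n \<in> S \<Longrightarrow> p \<in> S \<Longrightarrow> Sum_any (\<lambda>i. a n i * b p i) = (if n = p then d n else 0)"
  shows "Sum_any (\<lambda>i. Sum_any (\<lambda>n. c n * a n i) * Sum_any (\<lambda>p. g p * b p i)) = Sum_any (\<lambda>n. c n * g n * d n)"
proof -
  have on_S: "Sum_any F = sum F S" if "\<And>n. F n \<noteq> 0 \<Longrightarrow> n \<in> S" for F :: "'n \<Rightarrow> 'a"
    using fin(1) by (rule Sum_any.expand_superset) (use that in blast)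
  have on_I: "Sum_any F = sum F I" if "\<And>i. F i \<noteq> 0 \<Longrightarrow> i \<in> I" for F :: "'i \<Rightarrow> 'a"
    using fin(2) by (rule Sum_any.expand_superset) (use that in blast)
  have product: "Sum_any (\<lambda>n. c n * a n i) * Sum_any (\<lambda>p. g p * b p i)
      = (\<Sum>n\<in>S. \<Sum>p\<in>S. c n * g p * (a n i * b p i))" for i
    using on_S[of "\<lambda>n. c n * a n i"] on_S[of "\<lambda>p. g p * b p i"] supp_c supp_g
    by (force simp: sum_product mult_ac)
  have outside: "(\<Sum>n\<in>S. \<Sum>p\<in>S. c n * g p * (a n i * b p i)) = 0" if "i \<notin> I" for i
    using supp_a that by (metis (no_types, lifting) mult_zero_left mult_zero_right sum.neutral)
  have delta: "(\<Sum>p\<in>S. c n * g p * (\<Sum>i\<in>I. a n i * b p i)) = c n * g n * d n" if n: "n \<in> S" for n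
  proof -
    have "c n * g p * (\<Sum>i\<in>I. a n i * b p i) = (if n = p then c n * g n * d n else 0)" if "p \<in> S" for p
      using orth[OF n that] on_I[of "\<lambda>i. a n i * b p i"] supp_a[OF n] by force
    hence "(\<Sum>p\<in>S. c n * g p * (\<Sum>i\<in>I. a n i * b p i)) = (\<Sum>p\<in>S. if n = p then c n * g n * d n else 0)"
      by (rule sum.cong[OF refl])
    thus ?thesis using n fin(1) by simp
  qed
  have "Sum_any (\<lambda>i. Sum_any (\<lambda>n. c n * a n i) * Sum_any (\<lambda>p. g p * b p i))
      = (\<Sum>i\<in>I. \<Sum>n\<in>S. \<Sum>p\<in>S. c n * g p * (a n i * b p i))"
    unfolding product by (rule on_I) (use outside in blast)
  also have "\<dots> = (\<Sum>n\<in>S. \<Sum>p\<in>S. c n * g p * (\<Sum>i\<in>I. a n i * b p i))"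
    by (simp add: sum.swap[of _ I] sum_distrib_left)
  also have "\<dots> = (\<Sum>n\<in>S. c n * g n * d n)"
    by (rule sum.cong) (simp_all add: delta)
  also have "\<dots> = Sum_any (\<lambda>n. c n * g n * d n)"
    by (rule on_S[symmetric]) (use supp_c in force)
  finally show ?thesis .
qed

lemma three_term_recurrence_unique:
  fixes F G :: "int \<Rightarrow> int \<Rightarrow> 'a :: ring"
  assumes F0: "\<And>u. F 0 u = G 0 u" and c0: "c 0 = 0"
    and F: "\<And>a u. 0 \<le> a \<Longrightarrow> F (a + 1) u = F a u + F a (u - 1) - c a * F (a - 1) (u - 1)"
    and G: "\<And>a u. 0 \<le> a \<Longrightarrow> G (a + 1) u = G a u + G a (u - 1) - c a * G (a - 1) (u - 1)"
  shows "F (int n) u = G (int n) u"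
proof -
  have "\<forall>u. F (int n) u = G (int n) u \<and> F (int n + 1) u = G (int n + 1) u"
  proof (induction n)
    case 0
    show ?case using F[of 0] G[of 0] F0 c0 by simp
  next
    case (Suc n)
    have "F (int n + 1 + 1) u = G (int n + 1 + 1) u" for u
      using F[of "int n + 1" u] G[of "int n + 1" u] Suc.IH by simp
    thus ?case using Suc.IH by (simp add: add.commute)
  qed
  thus ?thesis by simp
qed

subsection \<open>\<open>q\<close>-Pochhammer symbols and Gaussian binomials\<close>

lemma qpoch_0 [simp]: "qpoch q 0 = 1"
  by (simp add: qpoch_def)

lemma qpoch_Suc: "qpoch q (Suc n) = qpoch q n * (1 - q ^ Suc n)"
  by (simp add: qpoch_def prod.nat_ivl_Suc' mult.commute)

lemma qpoch_eq_prod_lessThan: "qpoch q n = (\<Prod>s<n. 1 - q ^ Suc s)"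
  by (induction n) (simp_all add: qpoch_Suc)

lemma qpoch_at_zero: "qpoch 0 n = 1"
  by (induction n) (simp_all add: qpoch_Suc)

text \<open>\<open>(q)\<^sub>n\<close> for an integer \<open>n\<close>, and its reciprocal extended by zero to \<open>n < 0\<close>: products of
  reciprocal factorials then vanish outside the natural summation range.\<close>
definition qfac :: "complex \<Rightarrow> int \<Rightarrow> complex" where
  "qfac q n = qpoch q (nat n)"

definition rqfac :: "complex \<Rightarrow> int \<Rightarrow> complex" where
  "rqfac q n = (if n < 0 then 0 else inverse (qfac q n))"

lemma rqfac_neg [simp]: "n < 0 \<Longrightarrow> rqfac q n = 0"
  by (simp add: rqfac_def)

lemma qfac_0 [simp]: "qfac q 0 = 1" and rqfac_0 [simp]: "rqfac q 0 = 1"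
  by (simp_all add: qfac_def rqfac_def)

lemma rqfac_nonzero_imp: "rqfac q n \<noteq> 0 \<Longrightarrow> 0 \<le> n"
  by (cases "n < 0") auto

lemma qbinom_nonzero_imp: "qbinom q a b \<noteq> 0 \<Longrightarrow> 0 \<le> b \<and> b \<le> a"
  by (auto simp: qbinom_def split: if_splits)

definition qwt :: "complex \<Rightarrow> int \<Rightarrow> complex" where
  "qwt q n = (-1) ^ nat \<bar>n\<bar> * q powi choose2 n"

definition cbinom :: "complex \<Rightarrow> int \<Rightarrow> int \<Rightarrow> complex" where
  "cbinom q n i = qbinom q (2 * n) (n - i)"

lemma cbinom_nonzero_imp: "cbinom q n i \<noteq> 0 \<Longrightarrow> -n \<le> i \<and> i \<le> n"
  unfolding cbinom_def by (drule qbinom_nonzero_imp) simp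

lemma two_choose2: "2 * choose2 x = x * (x - 1)"
proof -
  have "even (x * (x - 1))" by simp
  thus ?thesis by (simp add: choose2_def)
qed

lemma choose2_add: "choose2 (a + b) = choose2 a + choose2 b + a * b"
  using two_choose2[of "a + b"] two_choose2[of a] two_choose2[of b] by (simp add: algebra_simps)

lemma choose2_uminus: "choose2 (- x) = choose2 x + x"
  using two_choose2[of "- x"] two_choose2[of x] by (simp add: algebra_simps)

lemma choose2_nonneg: "0 \<le> choose2 x"
proof -
  have "0 \<le> x * (x - 1)" by (cases "x \<ge> 1") (auto intro: mult_nonneg_nonneg mult_nonpos_nonpos)
  thus ?thesis using two_choose2[of x] by simp
qed

lemma minus_one_power_nat_abs: "(-1 :: complex) ^ nat \<bar>x\<bar> = (if even x then 1 else -1)"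
proof -
  have "even (nat \<bar>x\<bar>) \<longleftrightarrow> even x" by (simp add: even_nat_iff)
  thus ?thesis by (simp add: minus_one_power_iff)
qed

subsection \<open>Identities for \<open>0 < |q| < 1\<close>\<close>

text \<open>For such \<open>q\<close>, integer powers are multiplicative and no factor \<open>1 - q\<^sup>n\<close>, \<open>n > 0\<close>, vanishes.\<close>
locale q_disc =
  fixes q :: complex
  assumes q_small: "norm q < 1" and q_nonzero: "q \<noteq> 0"
begin

lemma one_minus_power_nonzero: "n > 0 \<Longrightarrow> 1 - q ^ n \<noteq> 0"
proof
  assume "n > 0" "1 - q ^ n = 0"
  hence "norm (q ^ n) = 1" by simp
  moreover have "norm (q ^ n) < 1" using \<open>n > 0\<close> q_small by (simp add: norm_power power_less_one_iff)
  ultimately show False by simp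
qed

lemma one_minus_powi_nonzero: "0 < n \<Longrightarrow> 1 - q powi n \<noteq> 0"
  using one_minus_power_nonzero[of "nat n"] by (simp add: power_int_def)

lemma qpoch_nonzero: "qpoch q n \<noteq> 0"
proof (induction n)
  case (Suc n)
  show ?case unfolding qpoch_Suc using Suc.IH one_minus_power_nonzero[of "Suc n"] by simp
qed simp

lemma qfac_rqfac: "0 \<le> n \<Longrightarrow> qfac q n * rqfac q n = 1"
  by (simp add: rqfac_def qfac_def qpoch_nonzero)

lemma qpowi_add: "q powi (m + n) = q powi m * q powi n"
  using power_int_add[of q m n] q_nonzero by simp

lemma qfac_step: "0 \<le> n \<Longrightarrow> qfac q (n + 1) = qfac q n * (1 - q powi (n + 1))"
proof -
  assume "0 \<le> n"
  then obtain m where "n = int m" using nonneg_int_cases by blast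
  moreover have "nat (int m + 1) = Suc m" by simp
  ultimately show ?thesis by (simp add: qfac_def qpoch_Suc power_int_def)
qed

text \<open>The reciprocal factorial satisfies \<open>1/(q)\<^sub>n = (1 - q\<^sup>n\<^sup>+\<^sup>1)/(q)\<^sub>n\<^sub>+\<^sub>1\<close> for
  every integer \<open>n\<close>, including \<open>n = -1\<close> where both sides vanish.\<close>
lemma rqfac_step: "rqfac q n = (1 - q powi (n + 1)) * rqfac q (n + 1)"
proof -
  consider "n < -1" | "n = -1" | "0 \<le> n" by linarith
  then show ?thesis
  proof cases
    case 3
    then show ?thesis using qfac_step[OF 3] qpoch_nonzero one_minus_powi_nonzero[of "n + 1"]
      by (simp add: rqfac_def qfac_def field_simps)
  qed auto
qed

lemma qbinom_rqfac: "0 \<le> a \<Longrightarrow> qbinom q a b = qfac q a * rqfac q b * rqfac q (a - b)"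
  by (auto simp: qbinom_def qfac_def rqfac_def field_simps)

lemma cbinom_rqfac: "0 \<le> n \<Longrightarrow> cbinom q n i = qfac q (2 * n) * rqfac q (n - i) * rqfac q (n + i)"
  unfolding cbinom_def by (subst qbinom_rqfac) (auto simp: algebra_simps)

lemma rqfac_pascal:
  "(1 - q powi (m + 1)) * (rqfac q t * rqfac q (m + 1 - t))
     = q powi t * rqfac q t * rqfac q (m - t) + rqfac q (t - 1) * rqfac q (m + 1 - t)"
proof -
  have e1: "rqfac q (m - t) = (1 - q powi (m + 1 - t)) * rqfac q (m + 1 - t)"
    using rqfac_step[of "m - t"] by (simp add: algebra_simps)
  have e2: "rqfac q (t - 1) = (1 - q powi t) * rqfac q t"
    using rqfac_step[of "t - 1"] by simp
  have e3: "q powi (m + 1) = q powi t * q powi (m + 1 - t)"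
    using qpowi_add[of t "m + 1 - t"] by simp
  show ?thesis unfolding e1 e2 e3 by (simp add: algebra_simps)
qed

lemma qbinom_pascal:
  assumes "0 \<le> n"
  shows "qbinom q (n + 1) t = qbinom q n t + q powi (n + 1 - t) * qbinom q n (t - 1)"
proof -
  have "qbinom q (n + 1) t = qfac q n * ((1 - q powi (n + 1)) * (rqfac q t * rqfac q (n + 1 - t)))"
    using assms by (simp add: qbinom_rqfac qfac_step mult_ac)
  also have "\<dots> = qfac q n * (rqfac q t * rqfac q (n - t)
      + q powi (n + 1 - t) * rqfac q (t - 1) * rqfac q (n + 1 - t))"
  proof -
    have "n - (n + 1 - t) = t - 1" "n + 1 - (n + 1 - t) = t" "n + 1 - t - 1 = n - t" by simp_all
    from rqfac_pascal[of n "n + 1 - t", unfolded this] show ?thesis by (simp add: mult_ac add_ac)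
  qed
  also have "\<dots> = qbinom q n t + q powi (n + 1 - t) * qbinom q n (t - 1)"
    using assms by (simp add: qbinom_rqfac algebra_simps)
  finally show ?thesis .
qed

lemma qwt_add: "qwt q (a + b) = qwt q a * qwt q b * q powi (a * b)"
  unfolding qwt_def minus_one_power_nat_abs choose2_add qpowi_add by auto

lemma qwt_uminus: "qwt q (- x) = qwt q x * q powi x"
  unfolding qwt_def minus_one_power_nat_abs choose2_uminus qpowi_add by auto

lemma qwt_0 [simp]: "qwt q 0 = 1"
  by (simp add: qwt_def choose2_def)

lemma qwt_square: "qwt q n * qwt q n = q powi (n * (n - 1))"
  using two_choose2[of n] by (simp add: qwt_def minus_one_power_nat_abs qpowi_add[symmetric])

theorem q_binomial_theorem:
  assumes y: "y \<noteq> 0"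
  shows "Sum_any (\<lambda>t. qwt q t * qbinom q (int n) t * y powi t) = (\<Prod>s<n. 1 - y * q ^ s)"
proof (induction n)
  case 0
  have "Sum_any (\<lambda>t. qwt q t * qbinom q 0 t * y powi t) = qwt q 0 * qbinom q 0 0 * y powi 0"
    by (rule Sum_any_single) (auto simp: qbinom_def)
  thus ?case by (simp add: qbinom_def)
next
  case (Suc n)
  define P where "P t = qwt q t * qbinom q (int n) t * y powi t" for t
  have fin: "finite {t. P t \<noteq> 0}"
    by (rule finite_support_ivl[where lo = 0 and hi = "int n"]) (auto simp: P_def qbinom_def)
  have shifted: "qwt q t * q powi (int n + 1 - t) * qbinom q (int n) (t - 1) * y powi t
      = - y * q ^ n * P (t - 1)" for t
  proof -
    have "q powi (t - 1) * q powi (int n - (t - 1)) = q ^ n"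
      using qpowi_add[of "t - 1" "int n - (t - 1)"] by simp
    moreover have "y powi t = y powi (t - 1) * y"
      using power_int_add_1[of y "t - 1"] y by simp
    moreover have "qwt q t = - qwt q (t - 1) * q powi (t - 1)"
      using qwt_add[of "t - 1" 1] by (simp add: qwt_def choose2_def)
    ultimately show ?thesis by (simp add: P_def algebra_simps)
  qed
  have "Sum_any (\<lambda>t. qwt q t * qbinom q (int (Suc n)) t * y powi t)
      = Sum_any (\<lambda>t. P t + (- y * q ^ n) * P (t - 1))"
  proof (rule Sum_any.cong)
    fix t
    have "qbinom q (int (Suc n)) t = qbinom q (int n) t + q powi (int n + 1 - t) * qbinom q (int n) (t - 1)"
      using qbinom_pascal[of "int n" t] by (simp add: add.commute)
    thus "qwt q t * qbinom q (int (Suc n)) t * y powi t = P t + (- y * q ^ n) * P (t - 1)"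
      using shifted[of t] by (simp add: P_def algebra_simps)
  qed
  also have "\<dots> = Sum_any P + Sum_any (\<lambda>t. (- y * q ^ n) * P (t - 1))"
  proof (rule Sum_any.distrib[OF fin])
    show "finite {t. (- y * q ^ n) * P (t - 1) \<noteq> 0}"
      by (rule finite_support_ivl[where lo = 1 and hi = "int n + 1"]) (auto simp: P_def qbinom_def)
  qed
  also have "Sum_any (\<lambda>t. (- y * q ^ n) * P (t - 1)) = (- y * q ^ n) * Sum_any P"
    unfolding Sum_any_mult_left using Sum_any_shift[of P "- 1"] by simp
  finally show ?case using Suc.IH by (simp add: P_def algebra_simps)
qed

definition cmoment :: "int \<Rightarrow> int \<Rightarrow> complex" where
  "cmoment n k = Sum_any (\<lambda>r. qwt q r * cbinom q n r * q powi (r * k))"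

text \<open>Reflecting \<open>r \<mapsto> n - r\<close> turns a moment into an instance of the \<open>q\<close>-binomial theorem:
  \<open>cmoment n k = (-1)\<^sup>n q\<^bsup>n(n-1)/2 + nk\<^esup> (q\<^bsup>1-n-k\<^esup>; q)\<^sub>2\<^sub>n\<close>.\<close>
lemma cmoment_product:
  assumes n: "0 \<le> n"
  shows "cmoment n k = qwt q n * q powi (n * k) * (\<Prod>s<nat (2 * n). 1 - q powi (1 - n - k) * q ^ s)"
proof -
  let ?y = "q powi (1 - n - k)"
  have "cmoment n k = Sum_any (\<lambda>t. qwt q (n - t) * cbinom q n (n - t) * q powi ((n - t) * k))"
    unfolding cmoment_def by (rule Sum_any_reflect[symmetric])
  also have "\<dots> = Sum_any (\<lambda>t. (qwt q n * q powi (n * k)) * (qwt q t * qbinom q (int (nat (2 * n))) t * ?y powi t))"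
  proof (rule Sum_any.cong)
    fix t
    have "qwt q (n - t) = qwt q n * qwt q t * q powi t * q powi (n * (- t))"
      using qwt_add[of n "- t"] qwt_uminus[of t] by simp
    moreover have "q powi t * q powi (n * (- t)) * q powi ((n - t) * k) = q powi (n * k) * ?y powi t"
      unfolding qpowi_add[symmetric] power_int_mult[symmetric] qpowi_add[symmetric]
      by (simp add: algebra_simps)
    ultimately show "qwt q (n - t) * cbinom q n (n - t) * q powi ((n - t) * k)
        = (qwt q n * q powi (n * k)) * (qwt q t * qbinom q (int (nat (2 * n))) t * ?y powi t)"
      using n by (simp add: cbinom_def algebra_simps)
  qed
  also have "\<dots> = qwt q n * q powi (n * k) * (\<Prod>s<nat (2 * n). 1 - ?y * q ^ s)"
  proof -
    have y: "?y \<noteq> 0" using q_nonzero by simp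
    show ?thesis unfolding Sum_any_mult_left q_binomial_theorem[OF y] ..
  qed
  finally show ?thesis .
qed

text \<open>The product contains the factor \<open>1 - q\<^sup>0\<close> unless \<open>k \<le> -n\<close> or \<open>k > n\<close>.\<close>
lemma cmoment_vanishes:
  assumes n: "0 \<le> n" and k: "1 - n \<le> k" "k \<le> n"
  shows "cmoment n k = 0"
proof -
  let ?s = "nat (n + k - 1)"
  have "q ^ ?s = q powi (n + k - 1)" using k by (simp add: power_int_def)
  hence "q powi (1 - n - k) * q ^ ?s = q powi ((1 - n - k) + (n + k - 1))" by (simp only: qpowi_add)
  hence "1 - q powi (1 - n - k) * q ^ ?s = 0" by simp
  moreover have "?s \<in> {..<nat (2 * n)}" using k by auto
  ultimately show ?thesis unfolding cmoment_product[OF n] by (metis mult_zero_right prod_zero finite_lessThan)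
qed

text \<open>At \<open>k = -n\<close> the product is \<open>(q)\<^sub>2\<^sub>n\<close> and the prefactors cancel.\<close>
lemma cmoment_bottom:
  assumes n: "0 \<le> n"
  shows "qwt q (- n) * cmoment n (- n) = qfac q (2 * n)"
proof -
  have "qwt q (- n) * (qwt q n * q powi (n * (- n))) = (qwt q n * qwt q n) * q powi n * q powi (n * (- n))"
    by (simp add: qwt_uminus mult_ac)
  also have "\<dots> = q powi (n * (n - 1) + n + n * (- n))" by (simp only: qwt_square qpowi_add)
  also have "n * (n - 1) + n + n * (- n) = 0" by (simp add: algebra_simps)
  finally have "qwt q (- n) * (qwt q n * q powi (n * (- n))) = 1" by simp
  moreover have "(\<Prod>s<nat (2 * n). 1 - q powi (1 - n - (- n)) * q ^ s) = qfac q (2 * n)"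
    by (simp add: qfac_def qpoch_eq_prod_lessThan)
  ultimately show ?thesis unfolding cmoment_product[OF n] by (simp add: mult.assoc[symmetric])
qed

definition cpair :: "int \<Rightarrow> int \<Rightarrow> complex" where
  "cpair n p = Sum_any (\<lambda>i. Sum_any (\<lambda>u. cbinom q n i * cbinom q p u * qwt q (i + u)))"

lemma cpair_commute: "cpair n p = cpair p n"
proof -
  have "cpair n p = Sum_any (\<lambda>u. Sum_any (\<lambda>i. cbinom q n i * cbinom q p u * qwt q (i + u)))"
    unfolding cpair_def by (rule Sum_any_swap_box[of "{-n..n}" "{-p..p}"]) (auto dest: cbinom_nonzero_imp)
  thus ?thesis unfolding cpair_def by (simp add: mult_ac add.commute)
qed

lemma cpair_moments: "cpair n p = Sum_any (\<lambda>u. cbinom q p u * qwt q u * cmoment n u)"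
proof -
  have "cpair n p = Sum_any (\<lambda>u. Sum_any (\<lambda>i. (cbinom q p u * qwt q u) * (qwt q i * cbinom q n i * q powi (i * u))))"
    unfolding cpair_def
    by (subst Sum_any_swap_box[of "{-n..n}" "{-p..p}"]) (auto dest: cbinom_nonzero_imp simp: qwt_add mult_ac)
  thus ?thesis by (simp only: Sum_any_mult_left cmoment_def)
qed

lemma cbinom_bottom: "0 \<le> n \<Longrightarrow> cbinom q n (- n) = 1"
  by (simp add: cbinom_def qbinom_def qpoch_nonzero)

text \<open>For \<open>p \<le> n\<close> only the moment at \<open>u = -n\<close> survives, and it lies in the support
  of row \<open>p\<close> only when \<open>p = n\<close>.\<close>
lemma cpair_lower:
  assumes p: "0 \<le> p" and pn: "p \<le> n"
  shows "cpair n p = (if n = p then qfac q (2 * p) else 0)"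
proof -
  have summand: "cbinom q p u * qwt q u * cmoment n u = (if u = - n \<and> n = p then qfac q (2 * p) else 0)" for u
  proof (cases "cbinom q p u = 0")
    case True
    thus ?thesis using cbinom_bottom[OF p] by auto
  next
    case False
    hence u: "- p \<le> u" "u \<le> p" using cbinom_nonzero_imp by blast+
    show ?thesis
    proof (cases "u = - n")
      case True
      hence "n = p" using u pn by simp
      thus ?thesis using True cbinom_bottom[OF p] cmoment_bottom[OF p] by (simp add: mult.assoc)
    next
      case False
      thus ?thesis using u p pn cmoment_vanishes[of n u] by simp
    qed
  qed
  show ?thesis unfolding cpair_moments summand
    by (subst Sum_any_single[where a = "- n"]) auto
qed

theorem cbinom_orthogonality:
  assumes "0 \<le> n" "0 \<le> p"
  shows "cpair n p = (if n = p then qfac q (2 * p) else 0)"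
  using cpair_lower[of p n] cpair_lower[of n p] cpair_commute[of n p] assms
  by (cases "p \<le> n") auto

lemma qbinom_recurrence:
  assumes a: "0 \<le> a"
  shows "qbinom q (a + 1) j = qbinom q a j + qbinom q a (j - 1) - (1 - q powi a) * qbinom q (a - 1) (j - 1)"
proof (cases "a = 0")
  case True
  have "qbinom q 1 j = qbinom q 0 j + qbinom q 0 (j - 1)"
    by (cases "j = 0"; cases "j = 1") (auto simp: qbinom_def qpoch_nonzero)
  thus ?thesis using True by simp
next
  case False
  hence a1: "1 \<le> a" using a by simp
  have e1: "rqfac q (a - j) = (1 - q powi (a + 1 - j)) * rqfac q (a + 1 - j)"
    using rqfac_step[of "a - j"] by (simp add: algebra_simps)
  have e2: "rqfac q (j - 1) = (1 - q powi j) * rqfac q j"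
    using rqfac_step[of "j - 1"] by simp
  have e3: "q powi (a + 1) = q powi (a + 1 - j) * q powi j"
    using qpowi_add[of "a + 1 - j" j] by simp
  have e4: "qfac q a = qfac q (a - 1) * (1 - q powi a)"
    using qfac_step[of "a - 1"] a1 by simp
  have e5: "qfac q (a + 1) = qfac q (a - 1) * (1 - q powi a) * (1 - q powi (a + 1))"
    using qfac_step[of a] a e4 by simp
  have e6: "a - 1 - (j - 1) = a - j" "a - (j - 1) = a + 1 - j" by simp_all
  show ?thesis using a a1
    apply (simp add: qbinom_rqfac e6)
    apply (simp add: e1 e2 e3 e4 e5)
    apply (simp add: algebra_simps)
    done
qed

text \<open>The coefficients \<open>(q)\<^sub>a (q)\<^sub>b / ((q)\<^sub>k (q)\<^sub>a\<^sub>-\<^sub>k (q)\<^sub>b\<^sub>-\<^sub>k)\<close> of the expansion of a product of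
  two Gaussian binomials.\<close>
definition conv_coeff :: "int \<Rightarrow> int \<Rightarrow> int \<Rightarrow> complex" where
  "conv_coeff b a k = qfac q a * qfac q b * rqfac q k * rqfac q (a - k) * rqfac q (b - k)"

lemma conv_coeff_nonzero_imp: "conv_coeff b a k \<noteq> 0 \<Longrightarrow> 0 \<le> k \<and> k \<le> a \<and> k \<le> b"
  unfolding conv_coeff_def by (auto dest!: rqfac_nonzero_imp)

lemma conv_coeff_outside: "k < 0 \<or> a < k \<Longrightarrow> conv_coeff b a k = 0"
  using conv_coeff_nonzero_imp by force

text \<open>The recurrence below at \<open>a = 0\<close>, where its last term drops out.\<close>
lemma conv_coeff_first_step:
  assumes b: "0 \<le> b"
  shows "conv_coeff b 1 k = conv_coeff b 0 k + conv_coeff b 0 (k - 1) * (1 - q powi (b - 2 * k + 2))"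
proof -
  consider "k < 0" | "k = 0" | "k = 1" | "k \<ge> 2" by linarith
  thus ?thesis
  proof cases
    case 2
    thus ?thesis using b qfac_rqfac[of 1] by (simp add: conv_coeff_def algebra_simps)
  next
    case 3
    have rb: "rqfac q (b - 1) = (1 - q powi b) * rqfac q b" using rqfac_step[of "b - 1"] by simp
    have "conv_coeff b 1 1 = qfac q b * rqfac q (b - 1)"
      using qfac_rqfac[of 1] by (simp add: conv_coeff_def mult_ac)
    moreover have "conv_coeff b 0 0 = qfac q b * rqfac q b" by (simp add: conv_coeff_def)
    moreover have "conv_coeff b 0 1 = 0" by (simp add: conv_coeff_def)
    ultimately show ?thesis using 3 unfolding rb by (simp add: algebra_simps)
  qed (auto simp: conv_coeff_def)
qed

text \<open>The coefficients satisfy the recurrence of \<open>qbinom_recurrence\<close>, twisted by the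
  factor \<open>1 - q\<^bsup>a+b-2k+2\<^esup>\<close>; all four terms share the factor \<open>B\<close> below.\<close>
lemma conv_coeff_recurrence:
  assumes a: "0 \<le> a" and b: "0 \<le> b"
  shows "conv_coeff b (a + 1) k = conv_coeff b a k + conv_coeff b a (k - 1) * (1 - q powi (a + b - 2 * k + 2))
           - (1 - q powi a) * conv_coeff b (a - 1) (k - 1)"
proof (cases "a = 0")
  case True
  thus ?thesis using conv_coeff_first_step[OF b, of k] by simp
next
  case False
  hence a1: "1 \<le> a" using a by simp
  define x where "x = q powi k"
  define z where "z = q powi (a + 1 - k)"
  define y where "y = q powi (b - k + 1)"
  have exz: "q powi (a + 1) = x * z" unfolding x_def z_def using qpowi_add[of k "a + 1 - k"] by simp
  have ezy: "q powi (a + b - 2 * k + 2) = z * y"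
    unfolding y_def z_def using qpowi_add[of "a + 1 - k" "b - k + 1"] by (simp add: algebra_simps)
  have P1: "qfac q a = qfac q (a - 1) * (1 - q powi a)" using qfac_step[of "a - 1"] a1 by simp
  have P2: "qfac q (a + 1) = qfac q (a - 1) * (1 - q powi a) * (1 - x * z)"
    using qfac_step[of a] a P1 exz by simp
  have rb: "rqfac q (b - k) = (1 - y) * rqfac q (b - k + 1)"
    unfolding y_def using rqfac_step[of "b - k"] by simp
  have ra: "rqfac q (a - k) = (1 - z) * rqfac q (a + 1 - k)"
    unfolding z_def using rqfac_step[of "a - k"] by (simp add: algebra_simps)
  have rk: "rqfac q (k - 1) = (1 - x) * rqfac q k"
    unfolding x_def using rqfac_step[of "k - 1"] by simp
  have i1: "a - (k - 1) = a + 1 - k" "b - (k - 1) = b - k + 1" "a - 1 - (k - 1) = a - k" by simp_all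
  define B where "B = qfac q (a - 1) * qfac q b * rqfac q k * rqfac q (a + 1 - k) * rqfac q (b - k + 1)"
  have h1: "conv_coeff b (a + 1) k = B * ((1 - q powi a) * (1 - x * z) * (1 - y))"
    unfolding conv_coeff_def P2 rb B_def by (simp add: algebra_simps)
  have h2: "conv_coeff b a k = B * ((1 - q powi a) * (1 - z) * (1 - y))"
    unfolding conv_coeff_def P1 rb ra B_def by (simp add: algebra_simps)
  have h3: "conv_coeff b a (k - 1) = B * ((1 - q powi a) * (1 - x))"
    unfolding conv_coeff_def i1 P1 rk B_def by (simp add: algebra_simps)
  have h4: "conv_coeff b (a - 1) (k - 1) = B * ((1 - x) * (1 - z))"
    unfolding conv_coeff_def i1 rk ra B_def by (simp add: algebra_simps)
  show ?thesis unfolding h1 h2 h3 h4 ezy by (simp add: algebra_simps)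
qed

definition conv_sum :: "int \<Rightarrow> int \<Rightarrow> int \<Rightarrow> complex" where
  "conv_sum b a u = Sum_any (\<lambda>j. qbinom q a j * qbinom q b (u - j))"

definition conv_expansion :: "int \<Rightarrow> int \<Rightarrow> int \<Rightarrow> complex" where
  "conv_expansion b a u = Sum_any (\<lambda>k. conv_coeff b a k * qbinom q (a + b - 2 * k) (u - k))"

text \<open>The convolution inherits the recurrence of \<open>[a, j]\<close> in \<open>a\<close>.\<close>
lemma conv_sum_recurrence:
  assumes a: "0 \<le> a"
  shows "conv_sum b (a + 1) u = conv_sum b a u + conv_sum b a (u - 1) - (1 - q powi a) * conv_sum b (a - 1) (u - 1)"
proof -
  have "conv_sum b (a + 1) u = Sum_any (\<lambda>j. qbinom q a j * qbinom q b (u - j)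
        + qbinom q a (j - 1) * qbinom q b (u - j) - (1 - q powi a) * (qbinom q (a - 1) (j - 1) * qbinom q b (u - j)))"
    unfolding conv_sum_def by (rule Sum_any.cong) (subst qbinom_recurrence[OF a], simp add: algebra_simps)
  also have "\<dots> = conv_sum b a u + Sum_any (\<lambda>j. qbinom q a (j - 1) * qbinom q b (u - j))
        - Sum_any (\<lambda>j. (1 - q powi a) * (qbinom q (a - 1) (j - 1) * qbinom q b (u - j)))"
    unfolding conv_sum_def
    by (rule Sum_any_add_diff; rule finite_support_ivl[where lo = 0 and hi = "a + 1"]) (auto simp: qbinom_def)
  also have "Sum_any (\<lambda>j. qbinom q a (j - 1) * qbinom q b (u - j)) = conv_sum b a (u - 1)"
    unfolding conv_sum_def
    using Sum_any_shift[of "\<lambda>j. qbinom q a (j - 1) * qbinom q b (u - j)" 1] by (simp add: algebra_simps)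
  also have "Sum_any (\<lambda>j. (1 - q powi a) * (qbinom q (a - 1) (j - 1) * qbinom q b (u - j)))
      = (1 - q powi a) * conv_sum b (a - 1) (u - 1)"
    unfolding conv_sum_def Sum_any_mult_left
    using Sum_any_shift[of "\<lambda>j. qbinom q (a - 1) (j - 1) * qbinom q b (u - j)" 1] by (simp add: algebra_simps)
  finally show ?thesis .
qed

lemma conv_term_recurrence:
  "conv_coeff b a k * qbinom q (a + b - 2 * k + 1) (u - k)
     = conv_coeff b a k * qbinom q (a + b - 2 * k) (u - k) + conv_coeff b a k * qbinom q (a + b - 2 * k) (u - 1 - k)
       - conv_coeff b a k * ((1 - q powi (a + b - 2 * k)) * qbinom q (a + b - 2 * k - 1) (u - 1 - k))"
proof (cases "conv_coeff b a k = 0")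
  case False
  hence "0 \<le> a + b - 2 * k" using conv_coeff_nonzero_imp by fastforce
  from qbinom_recurrence[OF this, of "u - k"]
  have eq: "qbinom q (a + b - 2 * k + 1) (u - k) = qbinom q (a + b - 2 * k) (u - k) + qbinom q (a + b - 2 * k) (u - 1 - k)
      - (1 - q powi (a + b - 2 * k)) * qbinom q (a + b - 2 * k - 1) (u - 1 - k)"
    by (simp add: algebra_simps)
  show ?thesis unfolding eq by (simp add: algebra_simps)
qed simp

text \<open>The expansion satisfies the same recurrence: combining the recurrences of the
  coefficients and of the binomials leaves a telescoping remainder.\<close>
lemma conv_expansion_recurrence:
  assumes a: "0 \<le> a" and b: "0 \<le> b"
  shows "conv_expansion b (a + 1) u
           = conv_expansion b a u + conv_expansion b a (u - 1) - (1 - q powi a) * conv_expansion b (a - 1) (u - 1)"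
proof -
  define X where "X k = conv_coeff b a k * ((1 - q powi (a + b - 2 * k)) * qbinom q (a + b - 2 * k - 1) (u - 1 - k))" for k
  define A where "A v k = conv_coeff b a k * qbinom q (a + b - 2 * k) (v - k)" for v k
  define C where "C k = (1 - q powi a) * (conv_coeff b (a - 1) (k - 1) * qbinom q (a + b + 1 - 2 * k) (u - k))" for k
  have "conv_expansion b (a + 1) u = Sum_any (\<lambda>k. (A u k + A (u - 1) k - C k) + (X (k - 1) - X k))"
  proof (unfold conv_expansion_def, rule Sum_any.cong)
    fix k
    have "conv_coeff b (a + 1) k * qbinom q (a + 1 + b - 2 * k) (u - k)
        = conv_coeff b a k * qbinom q (a + b - 2 * k + 1) (u - k) + X (k - 1) - C k"
      unfolding conv_coeff_recurrence[OF a b] by (simp add: X_def C_def algebra_simps)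
    also have "\<dots> = A u k + A (u - 1) k - C k + (X (k - 1) - X k)"
      unfolding conv_term_recurrence by (simp add: A_def X_def algebra_simps)
    finally show "conv_coeff b (a + 1) k * qbinom q (a + 1 + b - 2 * k) (u - k)
        = A u k + A (u - 1) k - C k + (X (k - 1) - X k)" .
  qed
  also have "\<dots> = Sum_any (\<lambda>k. A u k + A (u - 1) k - C k) + Sum_any (\<lambda>k. X (k - 1) - X k)"
    by (rule Sum_any.distrib; rule finite_support_ivl[where lo = 0 and hi = "a + 1"])
       (auto simp: A_def C_def X_def conv_coeff_outside)
  also have "Sum_any (\<lambda>k. X (k - 1) - X k) = 0"
    by (rule Sum_any_telescope, rule finite_support_ivl[where lo = 0 and hi = a]) (auto simp: X_def conv_coeff_outside)
  also have "Sum_any (\<lambda>k. A u k + A (u - 1) k - C k) = Sum_any (A u) + Sum_any (A (u - 1)) - Sum_any C"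
    by (rule Sum_any_add_diff; rule finite_support_ivl[where lo = 0 and hi = "a + 1"])
       (auto simp: A_def C_def conv_coeff_outside)
  also have "Sum_any C = (1 - q powi a) * conv_expansion b (a - 1) (u - 1)"
    unfolding C_def conv_expansion_def Sum_any_mult_left
    using Sum_any_shift[of "\<lambda>k. conv_coeff b (a - 1) (k - 1) * qbinom q (a + b + 1 - 2 * k) (u - k)" 1]
    by (simp add: algebra_simps)
  finally show ?thesis by (simp add: A_def conv_expansion_def)
qed

theorem qbinom_convolution:
  assumes b: "0 \<le> b"
  shows "conv_sum b (int n) u = conv_expansion b (int n) u"
proof (rule three_term_recurrence_unique[where c = "\<lambda>a. 1 - q powi a"])
  fix u
  have "conv_sum b 0 u = qbinom q b u"
    unfolding conv_sum_def by (subst Sum_any_single[where a = 0]) (auto simp: qbinom_def qpoch_nonzero)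
  moreover have "conv_coeff b 0 0 = 1"
    using qfac_rqfac[OF b] by (simp add: conv_coeff_def rqfac_def qfac_def)
  hence "conv_expansion b 0 u = qbinom q b u"
    unfolding conv_expansion_def by (subst Sum_any_single[where a = 0]) (use conv_coeff_nonzero_imp[of b 0] in force)+
  ultimately show "conv_sum b 0 u = conv_expansion b 0 u" by simp
qed (simp_all add: conv_sum_recurrence conv_expansion_recurrence b)

text \<open>Coefficients of the product of two central rows expanded in central rows.\<close>
definition ccoeff :: "int \<Rightarrow> int \<Rightarrow> int \<Rightarrow> complex" where
  "ccoeff M N p = qfac q (2 * M) * qfac q (2 * N) * rqfac q (M + N - p) * rqfac q (M - N + p) * rqfac q (N - M + p)"

lemma ccoeff_outside: "p < 0 \<or> M + N < p \<Longrightarrow> ccoeff M N p = 0"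
  unfolding ccoeff_def by (cases "M - N + p < 0") auto

lemma ccoeff_nonzero_imp: "ccoeff M N p \<noteq> 0 \<Longrightarrow> 0 \<le> p \<and> p \<le> M + N"
  using ccoeff_outside by force

lemma ccoeff_symmetric: "ccoeff M N p = ccoeff N M p"
  unfolding ccoeff_def by (simp add: algebra_simps)

text \<open>Reflecting \<open>j \<mapsto> M - j\<close> and \<open>k \<mapsto> M + N - p\<close> turns \<open>qbinom_convolution\<close> into
  \<open>\<Sum>\<^sub>j [2M, M - j] [2N, N - u + j] = \<Sum>\<^sub>p ccoeff M N p \<cdot> [2p, p - u]\<close>.\<close>
lemma cbinom_convolution:
  assumes M: "0 \<le> M" and N: "0 \<le> N"
  shows "Sum_any (\<lambda>j. cbinom q M j * cbinom q N (u - j)) = Sum_any (\<lambda>p. ccoeff M N p * cbinom q p u)"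
proof -
  have "Sum_any (\<lambda>j. cbinom q M j * cbinom q N (u - j))
      = Sum_any (\<lambda>j. (\<lambda>j'. qbinom q (2 * M) j' * qbinom q (2 * N) ((M + N - u) - j')) (M - j))"
    unfolding cbinom_def by (rule Sum_any.cong) (simp add: algebra_simps)
  also have "\<dots> = conv_sum (2 * N) (2 * M) (M + N - u)"
    unfolding conv_sum_def by (rule Sum_any_reflect)
  also have "\<dots> = conv_expansion (2 * N) (2 * M) (M + N - u)"
    using qbinom_convolution[of "2 * N" "nat (2 * M)"] M N by simp
  also have "\<dots> = Sum_any (\<lambda>p. (\<lambda>k. conv_coeff (2 * N) (2 * M) k * qbinom q (2 * M + 2 * N - 2 * k) ((M + N - u) - k)) (M + N - p))"
    unfolding conv_expansion_def by (rule Sum_any_reflect[symmetric])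
  also have "\<dots> = Sum_any (\<lambda>p. ccoeff M N p * cbinom q p u)"
  proof (rule Sum_any.cong)
    fix p
    have "2 * M - (M + N - p) = M - N + p" "2 * N - (M + N - p) = N - M + p"
      "2 * M + 2 * N - 2 * (M + N - p) = 2 * p" "M + N - u - (M + N - p) = p - u" by simp_all
    thus "(\<lambda>k. conv_coeff (2 * N) (2 * M) k * qbinom q (2 * M + 2 * N - 2 * k) ((M + N - u) - k)) (M + N - p)
        = ccoeff M N p * cbinom q p u"
      unfolding conv_coeff_def ccoeff_def cbinom_def by (simp add: algebra_simps)
  qed
  finally show ?thesis .
qed

definition wtrans :: "int \<Rightarrow> int \<Rightarrow> complex" where
  "wtrans p i = Sum_any (\<lambda>u. cbinom q p u * qwt q (i + u))"

lemma pairing_wtrans: "Sum_any (\<lambda>i. cbinom q n i * wtrans p i) = cpair n p"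
  unfolding wtrans_def cpair_def Sum_any_mult_left[symmetric] by (simp add: mult.assoc)

lemma double_sum_wtrans:
  assumes M: "0 \<le> M" and N: "0 \<le> N"
  shows "Sum_any (\<lambda>j. Sum_any (\<lambda>k. cbinom q M j * cbinom q N k * qwt q (i + j + k)))
       = Sum_any (\<lambda>p. ccoeff M N p * wtrans p i)"
proof -
  have "Sum_any (\<lambda>j. Sum_any (\<lambda>k. cbinom q M j * cbinom q N k * qwt q (i + j + k)))
      = Sum_any (\<lambda>j. Sum_any (\<lambda>u. cbinom q M j * cbinom q N (u - j) * qwt q (i + u)))"
  proof (rule Sum_any.cong)
    fix j
    show "Sum_any (\<lambda>k. cbinom q M j * cbinom q N k * qwt q (i + j + k))
        = Sum_any (\<lambda>u. cbinom q M j * cbinom q N (u - j) * qwt q (i + u))"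
      using Sum_any_shift[of "\<lambda>k. cbinom q M j * cbinom q N k * qwt q (i + j + k)" "- j"]
      by (simp add: algebra_simps)
  qed
  also have "\<dots> = Sum_any (\<lambda>u. Sum_any (\<lambda>j. cbinom q M j * cbinom q N (u - j)) * qwt q (i + u))"
    unfolding Sum_any_mult_right[symmetric]
    by (rule Sum_any_swap_box[of "{-M..M}" "{-(M + N)..M + N}"]) (auto dest!: cbinom_nonzero_imp)
  also have "\<dots> = Sum_any (\<lambda>u. Sum_any (\<lambda>p. ccoeff M N p * cbinom q p u * qwt q (i + u)))"
    unfolding cbinom_convolution[OF M N] Sum_any_mult_right ..
  also have "\<dots> = Sum_any (\<lambda>p. Sum_any (\<lambda>u. ccoeff M N p * cbinom q p u * qwt q (i + u)))"
    by (rule Sum_any_swap_box[of "{-(M + N)..M + N}" "{0..M + N}"])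
       (auto dest!: ccoeff_nonzero_imp cbinom_nonzero_imp)
  finally show ?thesis
    unfolding wtrans_def Sum_any_mult_left[symmetric] by (simp add: mult.assoc)
qed

text \<open>Pascal's rule applied under a sum: the basic step of the induction proofs of the
  \<open>q\<close>-Vandermonde and \<open>q\<close>-Saalschuetz summations below.\<close>
lemma rqfac_pascal_sum:
  "(1 - q powi (int n + 1)) * Sum_any (\<lambda>t. f t * rqfac q t * rqfac q (int n + 1 - t))
     = Sum_any (\<lambda>t. (q powi t * f t + f (t + 1)) * rqfac q t * rqfac q (int n - t))"
proof -
  define B where "B t = f (t + 1) * rqfac q t * rqfac q (int n - t)" for t
  have "(1 - q powi (int n + 1)) * Sum_any (\<lambda>t. f t * rqfac q t * rqfac q (int n + 1 - t))
      = Sum_any (\<lambda>t. (q powi t * f t * rqfac q t * rqfac q (int n - t) + B t) + (B (t - 1) - B t))"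
    unfolding Sum_any_mult_left[symmetric]
  proof (rule Sum_any.cong)
    fix t
    have "(1 - q powi (int n + 1)) * (f t * rqfac q t * rqfac q (int n + 1 - t))
        = f t * ((1 - q powi (int n + 1)) * (rqfac q t * rqfac q (int n + 1 - t)))" by (simp only: ac_simps)
    also have "\<dots> = f t * (q powi t * rqfac q t * rqfac q (int n - t) + rqfac q (t - 1) * rqfac q (int n + 1 - t))"
      by (simp only: rqfac_pascal)
    also have "\<dots> = q powi t * f t * rqfac q t * rqfac q (int n - t) + B t + (B (t - 1) - B t)"
      by (simp add: B_def algebra_simps)
    finally show "(1 - q powi (int n + 1)) * (f t * rqfac q t * rqfac q (int n + 1 - t))
        = q powi t * f t * rqfac q t * rqfac q (int n - t) + B t + (B (t - 1) - B t)" .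
  qed
  also have "\<dots> = Sum_any (\<lambda>t. q powi t * f t * rqfac q t * rqfac q (int n - t) + B t) + Sum_any (\<lambda>t. B (t - 1) - B t)"
    by (rule Sum_any.distrib; rule finite_support_ivl[where lo = 0 and hi = "int n + 1"]) (auto simp: B_def)
  also have "Sum_any (\<lambda>t. B (t - 1) - B t) = 0"
    by (rule Sum_any_telescope, rule finite_support_ivl[where lo = 0 and hi = "int n"]) (auto simp: B_def)
  finally show ?thesis by (simp add: B_def algebra_simps)
qed

text \<open>A form of the \<open>q\<close>-Chu--Vandermonde summation:
  \<open>\<Sum>\<^sub>t q\<^bsup>t\<^sup>2 + ct\<^esup> / ((q)\<^sub>t (q)\<^sub>n\<^sub>-\<^sub>t (q)\<^sub>c\<^sub>+\<^sub>t) = 1 / ((q)\<^sub>n (q)\<^sub>c\<^sub>+\<^sub>n)\<close>.\<close>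
definition vandermonde_sum :: "int \<Rightarrow> int \<Rightarrow> complex" where
  "vandermonde_sum n c = Sum_any (\<lambda>t. q powi (t * t + c * t) * rqfac q t * rqfac q (n - t) * rqfac q (c + t))"

text \<open>Pascal's rule in \<open>t\<close> lowers \<open>n\<close> and raises \<open>c\<close>.\<close>
lemma vandermonde_sum_step:
  "(1 - q powi (int n + 1)) * vandermonde_sum (int n + 1) c = vandermonde_sum (int n) (c + 1)"
proof -
  have "q powi t * (q powi (t * t + c * t) * rqfac q (c + t)) + q powi ((t + 1) * (t + 1) + c * (t + 1)) * rqfac q (c + (t + 1))
      = q powi (t * t + (c + 1) * t) * rqfac q (c + 1 + t)" for t
  proof -
    define E where "E = q powi (t * t + (c + 1) * t)"
    define x where "x = q powi (c + t + 1)"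
    define R where "R = rqfac q (c + t + 1)"
    have e1: "q powi t * q powi (t * t + c * t) = E"
      unfolding E_def by (simp add: qpowi_add[symmetric] algebra_simps)
    have e2: "q powi ((t + 1) * (t + 1) + c * (t + 1)) = E * x"
      unfolding E_def x_def by (simp add: qpowi_add[symmetric] algebra_simps)
    have e3: "rqfac q (c + t) = (1 - x) * R"
      unfolding x_def R_def using rqfac_step[of "c + t"] by simp
    have e4: "rqfac q (c + (t + 1)) = R" "rqfac q (c + 1 + t) = R"
      unfolding R_def by (simp_all add: algebra_simps)
    show ?thesis unfolding mult.assoc[symmetric] e1 e2 e3 e4 E_def[symmetric] by (simp add: algebra_simps)
  qed
  thus ?thesis
    using rqfac_pascal_sum[where f = "\<lambda>t. q powi (t * t + c * t) * rqfac q (c + t)" and n = n]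
    unfolding vandermonde_sum_def by (simp add: mult_ac)
qed

theorem q_vandermonde: "vandermonde_sum n c = rqfac q n * rqfac q (c + n)"
proof (cases "n < 0")
  case True
  have zero: "q powi (t * t + c * t) * rqfac q t * rqfac q (n - t) * rqfac q (c + t) = 0" for t
    using True by (cases "t < 0") auto
  have "vandermonde_sum n c = 0" unfolding vandermonde_sum_def zero by simp
  thus ?thesis using True by simp
next
  case False
  then obtain m where m: "n = int m" using nonneg_int_cases by (metis not_less)
  have "vandermonde_sum (int m) c = rqfac q (int m) * rqfac q (c + int m)"
  proof (induction m arbitrary: c)
    case 0
    show ?case unfolding vandermonde_sum_def
      by (subst Sum_any_single[where a = 0]) (auto simp: rqfac_def)
  next
    case (Suc m)
    have "(1 - q powi (int m + 1)) * vandermonde_sum (int m + 1) c = rqfac q (int m) * rqfac q (c + 1 + int m)"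
      using vandermonde_sum_step Suc.IH by simp
    also have "\<dots> = (1 - q powi (int m + 1)) * (rqfac q (int m + 1) * rqfac q (c + (int m + 1)))"
      unfolding rqfac_step[of "int m"] by (simp add: algebra_simps)
    finally show ?case using one_minus_powi_nonzero[of "int m + 1"] by (simp add: add.commute)
  qed
  thus ?thesis using m by simp
qed

text \<open>A form of the \<open>q\<close>-Pfaff--Saalschuetz summation: for \<open>c, K \<ge> 0\<close>,
  \<open>\<Sum>\<^sub>t q\<^bsup>t\<^sup>2 + ct\<^esup> / ((q)\<^sub>t (q)\<^sub>n\<^sub>-\<^sub>t (q)\<^sub>K\<^sub>-\<^sub>t (q)\<^sub>c\<^sub>+\<^sub>t)
     = (q)\<^sub>c\<^sub>+\<^sub>n\<^sub>+\<^sub>K / ((q)\<^sub>n (q)\<^sub>K (q)\<^sub>c\<^sub>+\<^sub>n (q)\<^sub>c\<^sub>+\<^sub>K)\<close>.\<close>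
definition saalschutz_sum :: "int \<Rightarrow> int \<Rightarrow> int \<Rightarrow> complex" where
  "saalschutz_sum K n c
     = Sum_any (\<lambda>t. q powi (t * t + c * t) * rqfac q t * rqfac q (n - t) * rqfac q (K - t) * rqfac q (c + t))"

text \<open>Pascal's rule in \<open>t\<close> lowers \<open>n\<close> and raises \<open>c\<close>, at the cost of a factor
  \<open>1 - q\<^bsup>c+K+1\<^esup>\<close>.\<close>
lemma saalschutz_sum_step:
  "(1 - q powi (int n + 1)) * saalschutz_sum K (int n + 1) c = (1 - q powi (c + K + 1)) * saalschutz_sum K (int n) (c + 1)"
proof -
  have "q powi t * (q powi (t * t + c * t) * rqfac q (K - t) * rqfac q (c + t))
        + q powi ((t + 1) * (t + 1) + c * (t + 1)) * rqfac q (K - (t + 1)) * rqfac q (c + (t + 1))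
      = (1 - q powi (c + K + 1)) * (q powi (t * t + (c + 1) * t) * rqfac q (K - t) * rqfac q (c + 1 + t))" for t
  proof -
    define E where "E = q powi (t * t + (c + 1) * t)"
    define x where "x = q powi (c + t + 1)"
    define y where "y = q powi (K - t)"
    define R where "R = rqfac q (c + t + 1)"
    define Q where "Q = rqfac q (K - t)"
    have e1: "q powi t * q powi (t * t + c * t) = E"
      unfolding E_def by (simp add: qpowi_add[symmetric] algebra_simps)
    have e2: "q powi ((t + 1) * (t + 1) + c * (t + 1)) = E * x"
      unfolding E_def x_def by (simp add: qpowi_add[symmetric] algebra_simps)
    have e3: "q powi (c + K + 1) = x * y"
      unfolding x_def y_def by (simp add: qpowi_add[symmetric] algebra_simps)
    have e4: "rqfac q (c + t) = (1 - x) * R"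
      unfolding x_def R_def using rqfac_step[of "c + t"] by simp
    have e5: "rqfac q (K - (t + 1)) = (1 - y) * Q"
      unfolding y_def Q_def using rqfac_step[of "K - (t + 1)"] by simp
    have e6: "rqfac q (c + (t + 1)) = R" "rqfac q (c + 1 + t) = R" "rqfac q (K - t) = Q"
      unfolding R_def Q_def by (simp_all add: algebra_simps)
    show ?thesis
      unfolding mult.assoc[symmetric] e1 e2 e3 e4 e5 e6 E_def[symmetric] by (simp add: algebra_simps)
  qed
  thus ?thesis
    using rqfac_pascal_sum[where f = "\<lambda>t. q powi (t * t + c * t) * rqfac q (K - t) * rqfac q (c + t)" and n = n]
    unfolding saalschutz_sum_def Sum_any_mult_left[symmetric] by (simp add: mult_ac)
qed

theorem q_saalschutz:
  assumes c: "0 \<le> c" and K: "0 \<le> K"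
  shows "saalschutz_sum K n c = rqfac q n * rqfac q K * qfac q (c + n + K) * rqfac q (c + n) * rqfac q (c + K)"
proof (cases "n < 0")
  case True
  have zero: "q powi (t * t + c * t) * rqfac q t * rqfac q (n - t) * rqfac q (K - t) * rqfac q (c + t) = 0" for t
    using True by (cases "t < 0") auto
  have "saalschutz_sum K n c = 0" unfolding saalschutz_sum_def zero by simp
  thus ?thesis using True by simp
next
  case False
  then obtain m where m: "n = int m" using nonneg_int_cases by (metis not_less)
  have "saalschutz_sum K (int m) c = rqfac q (int m) * rqfac q K * qfac q (c + int m + K) * rqfac q (c + int m) * rqfac q (c + K)"
    using c
  proof (induction m arbitrary: c)
    case 0
    have "saalschutz_sum K 0 c = rqfac q K * rqfac q c"
      unfolding saalschutz_sum_def by (subst Sum_any_single[where a = 0]) (auto simp: rqfac_def)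
    thus ?case using qfac_rqfac[of "c + K"] 0 K by simp
  next
    case (Suc m)
    have "(1 - q powi (int m + 1)) * saalschutz_sum K (int m + 1) c
        = (1 - q powi (c + K + 1)) * (rqfac q (int m) * rqfac q K * qfac q (c + 1 + int m + K) * rqfac q (c + 1 + int m) * rqfac q (c + 1 + K))"
      using saalschutz_sum_step Suc.IH[of "c + 1"] Suc.prems by simp
    also have "\<dots> = (1 - q powi (int m + 1))
        * (rqfac q (int m + 1) * rqfac q K * qfac q (c + (int m + 1) + K) * rqfac q (c + (int m + 1)) * rqfac q (c + K))"
    proof -
      have e: "c + 1 + int m + K = c + (int m + 1) + K" "c + 1 + int m = c + (int m + 1)" "c + 1 + K = c + K + 1"
        by simp_all
      show ?thesis unfolding e rqfac_step[of "int m"] rqfac_step[of "c + K"] by (simp add: algebra_simps)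
    qed
    finally show ?case using one_minus_powi_nonzero[of "int m + 1"] by (simp add: add.commute)
  qed
  thus ?thesis using m by simp
qed

text \<open>The row \<open>q\<^bsup>i\<^sup>2\<^esup> [2L, L - i]\<close> expanded in central rows (a Bailey-pair type identity).\<close>
definition lcoeff :: "int \<Rightarrow> int \<Rightarrow> complex" where
  "lcoeff L n = q powi (n * n) * qfac q (2 * L) * rqfac q (L - n) * rqfac q (2 * n)"

lemma lcoeff_nonzero_imp: "lcoeff L n \<noteq> 0 \<Longrightarrow> 0 \<le> n \<and> n \<le> L"
  unfolding lcoeff_def by (auto dest!: rqfac_nonzero_imp)

text \<open>Shifting \<open>n = t + |i|\<close> turns the left side into a \<open>q\<close>-Vandermonde sum.\<close>
lemma square_weighted_sum:
  "Sum_any (\<lambda>n. q powi (n * n) * rqfac q (L - n) * rqfac q (n - i) * rqfac q (n + i))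
     = q powi (i * i) * rqfac q (L - i) * rqfac q (L + i)"
proof -
  have nonneg: "Sum_any (\<lambda>n. q powi (n * n) * rqfac q (L - n) * rqfac q (n - i) * rqfac q (n + i))
     = q powi (i * i) * rqfac q (L - i) * rqfac q (L + i)" if "0 \<le> i" for i
  proof -
    have "Sum_any (\<lambda>n. q powi (n * n) * rqfac q (L - n) * rqfac q (n - i) * rqfac q (n + i))
        = Sum_any (\<lambda>t. q powi ((t + i) * (t + i)) * rqfac q (L - (t + i)) * rqfac q (t + i - i) * rqfac q (t + i + i))"
      by (rule Sum_any_shift[symmetric])
    also have "\<dots> = Sum_any (\<lambda>t. q powi (i * i) * (q powi (t * t + (2 * i) * t) * rqfac q t * rqfac q ((L - i) - t) * rqfac q (2 * i + t)))"
    proof (rule Sum_any.cong)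
      fix t
      have pw: "q powi ((t + i) * (t + i)) = q powi (i * i) * q powi (t * t + (2 * i) * t)"
        by (simp add: qpowi_add[symmetric] algebra_simps)
      have e: "L - (t + i) = (L - i) - t" "t + i - i = t" "t + i + i = 2 * i + t" by simp_all
      show "q powi ((t + i) * (t + i)) * rqfac q (L - (t + i)) * rqfac q (t + i - i) * rqfac q (t + i + i)
          = q powi (i * i) * (q powi (t * t + (2 * i) * t) * rqfac q t * rqfac q ((L - i) - t) * rqfac q (2 * i + t))"
        unfolding pw e by (simp only: mult_ac)
    qed
    also have "\<dots> = q powi (i * i) * rqfac q (L - i) * rqfac q (L + i)"
      unfolding Sum_any_mult_left vandermonde_sum_def[symmetric] q_vandermonde by (simp add: algebra_simps)
    finally show ?thesis .
  qed
  show ?thesis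
  proof (cases "0 \<le> i")
    case False
    thus ?thesis using nonneg[of "- i"] by (simp add: mult_ac add.commute)
  qed (rule nonneg)
qed

text \<open>Multiplying by \<open>(q)\<^sub>2\<^sub>L\<close> gives the expansion, since \<open>(q)\<^sub>2\<^sub>n\<close> cancels in each term.\<close>
lemma square_cbinom_expansion:
  assumes L: "0 \<le> L"
  shows "q powi (i * i) * cbinom q L i = Sum_any (\<lambda>n. lcoeff L n * cbinom q n i)"
proof -
  have "lcoeff L n * cbinom q n i = qfac q (2 * L) * (q powi (n * n) * rqfac q (L - n) * rqfac q (n - i) * rqfac q (n + i))" for n
  proof (cases "0 \<le> n")
    case True
    thus ?thesis using qfac_rqfac[of "2 * n"] by (simp add: lcoeff_def cbinom_rqfac mult_ac)
  next
    case False
    hence "rqfac q (n - i) * rqfac q (n + i) = 0" by (cases "n - i < 0") auto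
    thus ?thesis using False by (auto simp: lcoeff_def)
  qed
  hence "Sum_any (\<lambda>n. lcoeff L n * cbinom q n i) = qfac q (2 * L) * (q powi (i * i) * rqfac q (L - i) * rqfac q (L + i))"
    by (simp add: Sum_any_mult_left square_weighted_sum)
  thus ?thesis using L by (simp add: cbinom_rqfac mult_ac)
qed

lemma triple_sum_reduction:
  assumes L: "0 \<le> L" and M: "0 \<le> M" and N: "0 \<le> N"
  shows "Sum_any (\<lambda>i. Sum_any (\<lambda>j. Sum_any (\<lambda>k.
            q powi (i * i) * cbinom q L i * cbinom q M j * cbinom q N k * qwt q (i + j + k))))
       = Sum_any (\<lambda>n. lcoeff L n * ccoeff M N n * qfac q (2 * n))"
proof -
  let ?S = "{0..L + M + N}" and ?I = "{-(L + M + N)..L + M + N}"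
  have "Sum_any (\<lambda>i. Sum_any (\<lambda>j. Sum_any (\<lambda>k.
            q powi (i * i) * cbinom q L i * cbinom q M j * cbinom q N k * qwt q (i + j + k))))
      = Sum_any (\<lambda>i. (q powi (i * i) * cbinom q L i)
            * Sum_any (\<lambda>j. Sum_any (\<lambda>k. cbinom q M j * cbinom q N k * qwt q (i + j + k))))"
    by (simp add: Sum_any_mult_left[symmetric] mult.assoc)
  also have "\<dots> = Sum_any (\<lambda>i. Sum_any (\<lambda>n. lcoeff L n * cbinom q n i) * Sum_any (\<lambda>p. ccoeff M N p * wtrans p i))"
    unfolding square_cbinom_expansion[OF L] double_sum_wtrans[OF M N] ..
  also have "\<dots> = Sum_any (\<lambda>n. lcoeff L n * ccoeff M N n * qfac q (2 * n))"
  proof (rule biorthogonal_pairing[of ?S ?I])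
    fix n p assume "n \<in> ?S" "p \<in> ?S"
    thus "Sum_any (\<lambda>i. cbinom q n i * wtrans p i) = (if n = p then qfac q (2 * n) else 0)"
      by (simp add: pairing_wtrans cbinom_orthogonality)
  qed (use L M N in \<open>auto dest!: lcoeff_nonzero_imp ccoeff_nonzero_imp cbinom_nonzero_imp\<close>)
  finally show ?thesis .
qed

text \<open>In the collapsed sum \<open>(q)\<^sub>2\<^sub>n\<close> cancels the reciprocal factorial in \<open>lcoeff\<close>.\<close>
lemma collapsed_summand:
  "lcoeff L n * ccoeff M N n * qfac q (2 * n) = q powi (n * n) * qfac q (2 * L) * rqfac q (L - n) * ccoeff M N n"
proof (cases "0 \<le> n")
  case True
  thus ?thesis using qfac_rqfac[of "2 * n"] by (simp add: lcoeff_def mult_ac)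
qed (simp add: ccoeff_outside)

text \<open>Shifting \<open>n = t + (N - M)\<close> puts the collapsed sum into Saalschuetz form.\<close>
lemma collapsed_sum_saalschutz:
  assumes d: "d = N - M"
  shows "Sum_any (\<lambda>n. lcoeff L n * ccoeff M N n * qfac q (2 * n))
       = q powi (d * d) * qfac q (2 * L) * qfac q (2 * M) * qfac q (2 * N) * saalschutz_sum (2 * M) (L - d) (2 * d)"
proof -
  have "Sum_any (\<lambda>n. lcoeff L n * ccoeff M N n * qfac q (2 * n))
      = Sum_any (\<lambda>t. q powi ((t + d) * (t + d)) * qfac q (2 * L) * rqfac q (L - (t + d)) * ccoeff M N (t + d))"
    unfolding collapsed_summand by (rule Sum_any_shift[symmetric])
  also have "\<dots> = q powi (d * d) * qfac q (2 * L) * qfac q (2 * M) * qfac q (2 * N) * saalschutz_sum (2 * M) (L - d) (2 * d)"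
    unfolding saalschutz_sum_def Sum_any_mult_left[symmetric]
  proof (rule Sum_any.cong)
    fix t
    have pw: "q powi ((t + d) * (t + d)) = q powi (d * d) * q powi (t * t + (2 * d) * t)"
      by (simp add: qpowi_add[symmetric] algebra_simps)
    have e: "L - (t + d) = (L - d) - t" "M + N - (t + d) = 2 * M - t" "M - N + (t + d) = t" "N - M + (t + d) = 2 * d + t"
      unfolding d by simp_all
    show "q powi ((t + d) * (t + d)) * qfac q (2 * L) * rqfac q (L - (t + d)) * ccoeff M N (t + d)
        = q powi (d * d) * qfac q (2 * L) * qfac q (2 * M) * qfac q (2 * N)
          * (q powi (t * t + 2 * d * t) * rqfac q t * rqfac q (L - d - t) * rqfac q (2 * M - t) * rqfac q (2 * d + t))"
      unfolding pw ccoeff_def e by (simp only: mult_ac)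
  qed
  finally show ?thesis .
qed

text \<open>Evaluation of the collapsed sum by the \<open>q\<close>-Saalschuetz summation, first for \<open>M \<le> N\<close>.\<close>
lemma collapsed_sum_ordered:
  assumes L: "0 \<le> L" and M: "0 \<le> M" and MN: "M \<le> N"
  shows "Sum_any (\<lambda>n. lcoeff L n * ccoeff M N n * qfac q (2 * n))
       = q powi ((N - M)^2) * qfac q (L + M + N) * qbinom q (2 * L) (L + N - M)"
proof -
  define d where "d = N - M"
  have "saalschutz_sum (2 * M) (L - d) (2 * d)
      = rqfac q (L - d) * rqfac q (2 * M) * qfac q (L + M + N) * rqfac q (L + N - M) * rqfac q (2 * N)"
  proof -
    have e: "2 * d + (L - d) = L + N - M" "L + N - M + 2 * M = L + M + N" "2 * d + 2 * M = 2 * N"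
      unfolding d_def by simp_all
    have "0 \<le> 2 * d" "0 \<le> 2 * M" using M MN unfolding d_def by simp_all
    from q_saalschutz[OF this, of "L - d"] show ?thesis unfolding e .
  qed
  hence "Sum_any (\<lambda>n. lcoeff L n * ccoeff M N n * qfac q (2 * n))
      = q powi (d * d) * qfac q (L + M + N) * (qfac q (2 * L) * rqfac q (L + N - M) * rqfac q (L - d))
        * (qfac q (2 * M) * rqfac q (2 * M)) * (qfac q (2 * N) * rqfac q (2 * N))"
    unfolding collapsed_sum_saalschutz[OF d_def] by (simp only: mult_ac)
  also have "\<dots> = q powi ((N - M)^2) * qfac q (L + M + N) * qbinom q (2 * L) (L + N - M)"
  proof -
    have "qbinom q (2 * L) (L + N - M) = qfac q (2 * L) * rqfac q (L + N - M) * rqfac q (L - d)"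
      using qbinom_rqfac[of "2 * L" "L + N - M"] L unfolding d_def by (simp add: algebra_simps)
    moreover have "(N - M)^2 = d * d" unfolding d_def by (simp add: power2_eq_square)
    ultimately show ?thesis using qfac_rqfac[of "2 * M"] qfac_rqfac[of "2 * N"] M MN by simp
  qed
  finally show ?thesis .
qed

text \<open>The general case follows by the symmetry \<open>M \<leftrightarrow> N\<close>.\<close>
lemma collapsed_sum:
  assumes L: "0 \<le> L" and M: "0 \<le> M" and N: "0 \<le> N"
  shows "Sum_any (\<lambda>n. lcoeff L n * ccoeff M N n * qfac q (2 * n))
       = q powi ((N - M)^2) * qfac q (L + M + N) * qbinom q (2 * L) (L + N - M)"
proof (cases "M \<le> N")
  case False
  have "qbinom q (2 * L) (L + M - N) = qbinom q (2 * L) (L + N - M)"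
    using qbinom_rqfac[of "2 * L" "L + M - N"] qbinom_rqfac[of "2 * L" "L + N - M"] L by (simp add: algebra_simps)
  moreover have "(M - N)^2 = (N - M)^2" by (simp add: power2_eq_square algebra_simps)
  ultimately show ?thesis
    using collapsed_sum_ordered[OF L N, of M] False by (simp add: ccoeff_symmetric add_ac)
qed (rule collapsed_sum_ordered[OF L M])

theorem triple_sum_identity:
  assumes L: "0 \<le> L" and M: "0 \<le> M" and N: "0 \<le> N"
  shows "Sum_any (\<lambda>i. Sum_any (\<lambda>j. Sum_any (\<lambda>k.
            q powi (i * i) * cbinom q L i * cbinom q M j * cbinom q N k * qwt q (i + j + k))))
       = q powi ((N - M)^2) * qpoch q (nat (L + M + N)) * qbinom q (2 * L) (L + N - M)"
  by (simp only: triple_sum_reduction[OF L M N] collapsed_sum[OF L M N]) (simp add: qfac_def)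

end

definition triple_summand :: "complex \<Rightarrow> int \<Rightarrow> int \<Rightarrow> int \<Rightarrow> int \<times> int \<times> int \<Rightarrow> complex" where
  "triple_summand q L M N = (\<lambda>(i, j, k). (-1) ^ nat \<bar>i + j + k\<bar> * q powi (choose2 (i + j + k) + i ^ 2)
     * qbinom q (2 * L) (L - i) * qbinom q (2 * M) (M - j) * qbinom q (2 * N) (N - k))"

definition triple_value :: "complex \<Rightarrow> int \<Rightarrow> int \<Rightarrow> int \<Rightarrow> complex" where
  "triple_value q L M N = q powi ((N - M) ^ 2) * qpoch q (nat (L + M + N)) * qbinom q (2 * L) (L + N - M)"

lemma triple_summand_outside_box:
  "x \<notin> {-L..L} \<times> {-M..M} \<times> {-N..N} \<Longrightarrow> triple_summand q L M N x = 0"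
  by (cases x) (auto simp: triple_summand_def qbinom_def)

lemma (in q_disc) triple_summand_eq:
  "triple_summand q L M N (i, j, k) = q powi (i * i) * cbinom q L i * cbinom q M j * cbinom q N k * qwt q (i + j + k)"
  by (simp add: triple_summand_def cbinom_def qwt_def qpowi_add power2_eq_square mult_ac)

lemma (in q_disc) triple_sum_box:
  assumes "0 \<le> L" "0 \<le> M" "0 \<le> N"
  shows "sum (triple_summand q L M N) ({-L..L} \<times> {-M..M} \<times> {-N..N}) = triple_value q L M N"
  by (simp add: sum_box_Sum_any triple_summand_outside_box triple_summand_eq triple_sum_identity assms
      triple_value_def)

text \<open>Both sides are continuous at \<open>q = 0\<close>, all exponents of \<open>q\<close> being nonnegative.\<close>
lemma isCont_qpoch: "isCont (\<lambda>q. qpoch q n) a"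
  unfolding qpoch_def by (intro continuous_intros)

lemma isCont_powi_nonneg: "0 \<le> e \<Longrightarrow> isCont (\<lambda>q :: complex. q powi e) a"
  by (simp add: power_int_def)

lemma isCont_qbinom_at_0: "isCont (\<lambda>q. qbinom q a b) 0"
proof (cases "0 \<le> b \<and> 0 \<le> a - b")
  case True
  thus ?thesis unfolding qbinom_def by (simp, intro continuous_intros isCont_qpoch) (simp add: qpoch_at_zero)
next
  case False
  hence "(\<lambda>q. qbinom q a b) = (\<lambda>q. 0)" by (auto simp: qbinom_def)
  thus ?thesis by simp
qed

lemma continuous_agree_at_0:
  fixes f g :: "complex \<Rightarrow> 'a :: t2_space"
  assumes "isCont f 0" "isCont g 0" "\<And>q. q \<noteq> 0 \<Longrightarrow> norm q < 1 \<Longrightarrow> f q = g q"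
  shows "f 0 = g 0"
proof -
  have "eventually (\<lambda>q. f q = g q) (at 0)"
    unfolding eventually_at by (rule exI[of _ 1]) (auto intro: assms(3))
  hence "(g \<longlongrightarrow> f 0) (at 0)" using assms(1) unfolding isCont_def by (rule tendsto_cong[THEN iffD1])
  thus ?thesis using assms(2) unfolding isCont_def by (rule LIM_unique)
qed

lemma isCont_triple_summand: "isCont (\<lambda>q. triple_summand q L M N x) 0"
proof -
  obtain i j k where x: "x = (i, j, k)" by (cases x) auto
  have "0 \<le> choose2 (i + j + k) + i ^ 2" using choose2_nonneg[of "i + j + k"] by simp
  thus ?thesis unfolding triple_summand_def x
    by (simp only: case_prod_conv) (intro continuous_intros isCont_qbinom_at_0 isCont_powi_nonneg)
qed

lemma isCont_triple_value: "isCont (\<lambda>q. triple_value q L M N) 0"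
  unfolding triple_value_def by (intro continuous_intros isCont_qbinom_at_0 isCont_powi_nonneg isCont_qpoch) simp

theorem mainTheorem9:
  fixes q :: complex and L M N :: int
  assumes "norm q < 1" and "0 \<le> L" and "0 \<le> M" and "0 \<le> N"
  shows "((\<lambda>(i, j, k). (-1) ^ nat \<bar>i + j + k\<bar> * q powi (choose2 (i + j + k) + i ^ 2)
            * qbinom q (2 * L) (L - i) * qbinom q (2 * M) (M - j) * qbinom q (2 * N) (N - k))
          has_sum (q powi ((N - M) ^ 2) * qpoch q (nat (L + M + N)) * qbinom q (2 * L) (L + N - M)))
         (UNIV :: (int \<times> int \<times> int) set)"
proof -
  let ?box = "{-L..L} \<times> {-M..M} \<times> {-N..N}"
  have nonzero: "sum (triple_summand p L M N) ?box = triple_value p L M N" if "p \<noteq> 0" "norm p < 1" for p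
    using q_disc.triple_sum_box[of p L M N] that assms by (simp add: q_disc_def)
  have "sum (triple_summand q L M N) ?box = triple_value q L M N"
  proof (cases "q = 0")
    case True
    have "isCont (\<lambda>p. sum (triple_summand p L M N) ?box) 0"
      by (intro isCont_sum ballI isCont_triple_summand)
    thus ?thesis using continuous_agree_at_0[OF _ isCont_triple_value nonzero] True by simp
  qed (use nonzero assms(1) in simp)
  hence "(triple_summand q L M N has_sum triple_value q L M N) UNIV"
    by (intro has_sum_finite_neutralI[of ?box]) (auto simp: triple_summand_outside_box)
  thus ?thesis by (simp add: triple_summand_def triple_value_def)
qed

end
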